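(* Let $F$ be a finite field with $q=|F|$. Let $k,m,n\in\mathbb{N}$ with $k\le m$ and $k\le n+1$. Fix $a\in F^k$. Then $$\sum_{\substack{x\in F^{m+n+1}\\ x_{[0,k)}=a}}\ \sum_{\substack{v\in F^{1\times(m+1)}\\ v\ne 0}}[v\,H_{m,n}(x)=0] \;-\; q\sum_{\substack{x\in F^{m+n+1}\\ x_{[0,k)}=a}}\ \sum_{\substack{v\in F^{1\times m}\\ v\ne 0}}[v\,H_{m-1,n+1}(x)=0] = (q-1)q^{2m-k}.$$
   Context: $\mathbb{N}=\{0,1,2,\ldots\}$. $x_{[0,k)}$ denotes $(x_0,\ldots,x_{k-1})$. For a statement $\mathcal{A}$, $[\mathcal{A}]$ is $1$ if true, $0$ if false. For $x=(x_0,\ldots,x_N)\in F^{N+1}$ and integers $p,p'\ge -1$ with $p+p'\le N$, $H_{p,p'}(x)=(x_{i+j})_{0\le i\le p,\,0\le j\le p'}$. *)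

theory Defs
  imports Main
begin

text \<open>Vectors in F^r are lists of length r (indices 0..r-1).
  The Hankel matrix H_{p,p'}(x) has rows indexed 0..p and columns 0..p';
  we parametrise it by its number of rows r = p+1 and columns c = p'+1,
  so that p = -1 (zero rows) is representable.\<close>

definition hankel_entry :: "'a list \<Rightarrow> nat \<Rightarrow> nat \<Rightarrow> 'a" where
  "hankel_entry x i j = x ! (i + j)"

definition vec_hankel_zero :: "'a::field list \<Rightarrow> nat \<Rightarrow> nat \<Rightarrow> 'a list \<Rightarrow> bool" where
  "vec_hankel_zero x r c v \<longleftrightarrow> (\<forall>j<c. (\<Sum>i<r. v ! i * hankel_entry x i j) = 0)"

definition nonzero_vecs :: "nat \<Rightarrow> 'a::zero list set" where
  "nonzero_vecs r = {v. length v = r \<and> v \<noteq> replicate r 0}"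

end

(* Swap the two summations and count, for each nonzero v, the words x with prefix a and
   v H(x) = 0.  If the last entry v_m is nonzero, the n + 1 column equations determine
   x_m, ..., x_{m+n} recursively from the earlier entries, so there are q^(m-k) solutions,
   and there are (q - 1) q^m such v.  Otherwise v = (w, 0) with w nonzero, and v H_{m,n}(x) = 0
   says that w H_{m-1,n+1}(x) vanishes except possibly in its last column.  That last equation
   has a unique solution in x_{d+n+1}, d the last nonzero index of w, a coordinate occurring
   nowhere else; so such v has exactly q times as many solutions as w has in the second sum. *)
theory Submission
  imports Defs "HOL-Library.Cardinality"
begin

lemma finite_lists_length_UNIV: "finite {xs :: 'a::finite list. length xs = n}"
  using finite_lists_length_eq[OF finite_class.finite_UNIV, of n] by simp

lemma card_lists_length_UNIV: "card {xs :: 'a::finite list. length xs = n} = CARD('a) ^ n"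
  using card_lists_length_eq[OF finite_class.finite_UNIV, of n] by simp

lemma card_lists_with_prefix:
  fixes a :: "'a::finite list"
  assumes "length a \<le> m"
  shows "card {x. length x = m \<and> take (length a) x = a} = CARD('a) ^ (m - length a)"
proof -
  have "{x. length x = m \<and> take (length a) x = a} = (\<lambda>w. a @ w) ` {w. length w = m - length a}"
  proof (intro equalityI subsetI)
    fix x assume x: "x \<in> {x. length x = m \<and> take (length a) x = a}"
    then have "x = a @ drop (length a) x"
      using append_take_drop_id[of "length a" x] by simp
    with x show "x \<in> (\<lambda>w. a @ w) ` {w. length w = m - length a}"
      by (intro image_eqI[of _ _ "drop (length a) x"]) auto
  next
    fix x assume "x \<in> (\<lambda>w. a @ w) ` {w. length w = m - length a}"
    with assms show "x \<in> {x. length x = m \<and> take (length a) x = a}" by auto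
  qed
  then show ?thesis
    by (simp add: card_image inj_on_def card_lists_length_UNIV)
qed

lemma card_eq_CARD_mult_card_if_unique_update:
  fixes S :: "'a::finite list set"
  assumes "\<And>x. x \<in> S \<Longrightarrow> p < length x"
    and "\<And>x c. x \<in> S \<Longrightarrow> x[p := c] \<in> S"
    and "\<And>x. x \<in> S \<Longrightarrow> \<exists>!c. E (x[p := c])"
  shows "card S = CARD('a) * card {x \<in> S. E x}"
proof -
  define sol where "sol x = (THE c. E (x[p := c]))" for x
  have sol_solves: "E (x[p := sol x])" if "x \<in> S" for x
    unfolding sol_def by (rule theI'[OF assms(3)[OF that]])
  have sol_unique: "sol x = c" if "x \<in> S" "E (x[p := c])" for x c
    unfolding sol_def by (rule the1_equality[OF assms(3)[OF that(1)] that(2)])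
  have "bij_betw (\<lambda>(y, c). y[p := c]) ({x \<in> S. E x} \<times> (UNIV :: 'a set)) S"
  proof (rule bij_betw_byWitness[where f' = "\<lambda>x. (x[p := sol x], x ! p)"])
    show "\<forall>u \<in> {x \<in> S. E x} \<times> (UNIV :: 'a set). (\<lambda>x. (x[p := sol x], x ! p)) ((\<lambda>(y, c). y[p := c]) u) = u"
    proof
      fix u assume "u \<in> {x \<in> S. E x} \<times> (UNIV :: 'a set)"
      then obtain y c where u: "u = (y, c)" and y: "y \<in> S" "E y" by blast
      have "sol (y[p := c]) = y ! p"
        using sol_unique[of "y[p := c]" "y ! p"] assms(2)[OF y(1)] y(2) by simp
      then show "(\<lambda>x. (x[p := sol x], x ! p)) ((\<lambda>(y, c). y[p := c]) u) = u"
        using u assms(1)[OF y(1)] by simp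
    qed
    show "\<forall>x \<in> S. (\<lambda>(y, c). y[p := c]) (x[p := sol x], x ! p) = x" by simp
    show "(\<lambda>(y, c). y[p := c]) ` ({x \<in> S. E x} \<times> (UNIV :: 'a set)) \<subseteq> S" using assms(2) by auto
    show "(\<lambda>x. (x[p := sol x], x ! p)) ` S \<subseteq> {x \<in> S. E x} \<times> (UNIV :: 'a set)"
      using assms(2) sol_solves by auto
  qed
  then have "card ({x \<in> S. E x} \<times> (UNIV :: 'a set)) = card S"
    by (rule bij_betw_same_card)
  then show ?thesis
    by (simp add: card_cartesian_product mult.commute)
qed

lemma bij_betw_butlast_if_unique_snoc:
  assumes "\<And>y. y \<in> P \<Longrightarrow> \<exists>!c. y @ [c] \<in> Q"
    and "\<And>x. x \<in> Q \<Longrightarrow> x \<noteq> [] \<and> butlast x \<in> P"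
  shows "bij_betw butlast Q P"
proof (rule bij_betw_imageI)
  show "inj_on butlast Q"
  proof (rule inj_onI)
    fix x x' assume x: "x \<in> Q" and x': "x' \<in> Q" and eq: "butlast x = butlast x'"
    define y where "y = butlast x"
    have y: "y \<in> P" and xy: "x = y @ [last x]"
      using assms(2)[OF x] by (simp_all add: y_def)
    have x'y: "x' = y @ [last x']"
      using assms(2)[OF x'] eq by (simp add: y_def)
    have "last x = last x'"
      using assms(1)[OF y] x x' xy x'y by metis
    with xy x'y show "x = x'" by simp
  qed
  show "butlast ` Q = P"
  proof
    show "butlast ` Q \<subseteq> P" using assms(2) by blast
    show "P \<subseteq> butlast ` Q"
    proof
      fix y assume "y \<in> P"
      then obtain c where "y @ [c] \<in> Q" using assms(1) by blast
      then show "y \<in> butlast ` Q" by (intro image_eqI[of _ _ "y @ [c]"]) auto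
    qed
  qed
qed

lemma last_nonzero_indexE:
  fixes v :: "'a::zero list"
  assumes "v \<noteq> replicate (length v) 0"
  obtains d where "d < length v" "v ! d \<noteq> 0" "\<And>i. i < length v \<Longrightarrow> v ! i \<noteq> 0 \<Longrightarrow> i \<le> d"
proof -
  define D where "D = {i. i < length v \<and> v ! i \<noteq> 0}"
  have "D \<noteq> {}"
    using assms by (auto simp: D_def list_eq_iff_nth_eq)
  moreover have "finite D"
    by (simp add: D_def)
  ultimately have "Max D \<in> D" "\<And>i. i \<in> D \<Longrightarrow> i \<le> Max D"
    by simp_all
  then show thesis
    by (intro that[of "Max D"]) (auto simp: D_def)
qed

definition vec_hankel :: "'a::field list \<Rightarrow> 'a list \<Rightarrow> nat \<Rightarrow> 'a" where
  "vec_hankel v x j = (\<Sum>i<length v. v ! i * x ! (i + j))"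

lemma vec_hankel_zero_iff:
  "length v = r \<Longrightarrow> vec_hankel_zero x r c v \<longleftrightarrow> (\<forall>j<c. vec_hankel v x j = 0)"
  by (simp add: vec_hankel_zero_def vec_hankel_def hankel_entry_def)

lemma vec_hankel_snoc_zero: "vec_hankel (v @ [0]) x j = vec_hankel v x j"
proof -
  have "(\<Sum>i<length v. (v @ [0]) ! i * x ! (i + j)) = (\<Sum>i<length v. v ! i * x ! (i + j))"
    by (rule sum.cong) (simp_all add: nth_append)
  then show ?thesis
    by (simp add: vec_hankel_def)
qed

lemma vec_hankel_append:
  "j + length v \<le> length y \<Longrightarrow> vec_hankel v (y @ z) j = vec_hankel v y j"
  unfolding vec_hankel_def by (rule sum.cong) (simp_all add: nth_append)

lemma vec_hankel_list_update_eq: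
  assumes "\<And>i. i < length v \<Longrightarrow> v ! i \<noteq> 0 \<Longrightarrow> i + j \<noteq> p"
  shows "vec_hankel v (x[p := c]) j = vec_hankel v x j"
proof -
  have "v ! i * x[p := c] ! (i + j) = v ! i * x ! (i + j)" if "i < length v" for i
    using assms[OF that] by (cases "v ! i = 0") auto
  then show ?thesis
    unfolding vec_hankel_def by (intro sum.cong) auto
qed

lemma vec_hankel_list_update_affine:
  assumes "d < length v" "d + j < length x"
  shows "vec_hankel v (x[d + j := c]) j = v ! d * c + vec_hankel v (x[d + j := 0]) j"
proof -
  have "(\<Sum>i\<in>{..<length v} - {d}. v ! i * x[d + j := c] ! (i + j))
      = (\<Sum>i\<in>{..<length v} - {d}. v ! i * x[d + j := 0] ! (i + j))"
    by (rule sum.cong) (auto simp: nth_list_update)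
  with assms show ?thesis
    unfolding vec_hankel_def by (simp add: sum.remove[of "{..<length v}" d])
qed

lemma ex1_vec_hankel_list_update_eq_0:
  assumes "d < length v" "v ! d \<noteq> 0" "d + j < length x"
  shows "\<exists>!c. vec_hankel v (x[d + j := c]) j = 0"
proof -
  define r where "r = vec_hankel v (x[d + j := 0]) j"
  have "vec_hankel v (x[d + j := c]) j = 0 \<longleftrightarrow> c = - r / v ! d" for c
    using assms vec_hankel_list_update_affine[OF assms(1,3), of c]
    by (auto simp: r_def field_simps eq_neg_iff_add_eq_0)
  then show ?thesis
    by simp
qed

lemma card_vec_hankel_kernel_last_nonzero:
  fixes v a :: "'a::{finite,field} list"
  assumes v: "length v = m + 1" "v ! m \<noteq> 0" and a: "length a \<le> m"
  shows "card {x. length x = m + T \<and> take (length a) x = a \<and> (\<forall>j<T. vec_hankel v x j = 0)}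
           = CARD('a) ^ (m - length a)"
proof (induction T)
  case 0
  show ?case
    using card_lists_with_prefix[OF a] by simp
next
  case (Suc T)
  define P where "P T = {x. length x = m + T \<and> take (length a) x = a \<and> (\<forall>j<T. vec_hankel v x j = 0)}"
    for T
  have "bij_betw butlast (P (Suc T)) (P T)"
  proof (rule bij_betw_butlast_if_unique_snoc)
    fix y assume y: "y \<in> P T"
    then have len_y: "length y = m + T"
      by (simp add: P_def)
    have "y @ [c] \<in> P (Suc T) \<longleftrightarrow> vec_hankel v ((y @ [0])[m + T := c]) T = 0" for c
    proof -
      have "(y @ [0])[m + T := c] = y @ [c]"
        using len_y by (simp add: list_update_append)
      moreover have "vec_hankel v (y @ [c]) j = 0" if "j < T" for j
        using y that v(1) by (simp add: P_def vec_hankel_append)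
      ultimately show ?thesis
        using y a by (auto simp: P_def less_Suc_eq)
    qed
    moreover have "\<exists>!c. vec_hankel v ((y @ [0])[m + T := c]) T = 0"
      using ex1_vec_hankel_list_update_eq_0[of m v T "y @ [0]"] v len_y by simp
    ultimately show "\<exists>!c. y @ [c] \<in> P (Suc T)"
      by simp
  next
    fix x assume x: "x \<in> P (Suc T)"
    then have "x \<noteq> []"
      by (auto simp: P_def)
    then have "vec_hankel v (butlast x) j = vec_hankel v x j" if "j < T" for j
      using vec_hankel_append[of j v "butlast x" "[last x]"] x that v(1)
      by (simp add: P_def)
    with x \<open>x \<noteq> []\<close> a show "x \<noteq> [] \<and> butlast x \<in> P T"
      by (auto simp: P_def take_butlast)
  qed
  then show ?case
    using Suc.IH bij_betw_same_card by (fastforce simp: P_def)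
qed

lemma card_vec_hankel_kernel_extra_column:
  fixes w a :: "'a::{finite,field} list"
  assumes w: "w \<noteq> replicate (length w) 0" and "k \<le> c"
  shows "card {x. length x = length w + c \<and> take k x = a \<and> (\<forall>j<c. vec_hankel w x j = 0)}
       = CARD('a) * card {x. length x = length w + c \<and> take k x = a \<and> (\<forall>j<Suc c. vec_hankel w x j = 0)}"
proof -
  obtain d where d: "d < length w" "w ! d \<noteq> 0" and d_last: "\<And>i. i < length w \<Longrightarrow> w ! i \<noteq> 0 \<Longrightarrow> i \<le> d"
    using last_nonzero_indexE[OF w] by blast
  define S where "S = {x. length x = length w + c \<and> take k x = a \<and> (\<forall>j<c. vec_hankel w x j = 0)}"
  \<comment> \<open>Coordinate \<open>d + c\<close> occurs in the equation of column \<open>c\<close>, with coefficient \<open>w ! d \<noteq> 0\<close>,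
    but neither in the prefix nor in the equations of the earlier columns.\<close>
  have "card S = CARD('a) * card {x \<in> S. vec_hankel w x c = 0}"
  proof (rule card_eq_CARD_mult_card_if_unique_update[where p = "d + c"])
    fix x assume x: "x \<in> S"
    then show "d + c < length x"
      using d by (simp add: S_def)
    then show "\<exists>!y. vec_hankel w (x[d + c := y]) c = 0"
      using ex1_vec_hankel_list_update_eq_0 d by blast
    fix y
    have "vec_hankel w (x[d + c := y]) j = vec_hankel w x j" if "j < c" for j
      using d_last that by (intro vec_hankel_list_update_eq) fastforce
    then show "x[d + c := y] \<in> S"
      using x \<open>k \<le> c\<close> by (simp add: S_def)
  qed
  moreover have "{x \<in> S. vec_hankel w x c = 0}
      = {x. length x = length w + c \<and> take k x = a \<and> (\<forall>j<Suc c. vec_hankel w x j = 0)}"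
    by (auto simp: S_def less_Suc_eq)
  ultimately show ?thesis
    by (simp add: S_def)
qed

lemma nonzero_vecs_Suc:
  "nonzero_vecs (Suc m) = (\<lambda>w. w @ [0]) ` nonzero_vecs m \<union> {v. length v = Suc m \<and> v ! m \<noteq> 0}"
proof (intro equalityI subsetI)
  fix v assume "v \<in> nonzero_vecs (Suc m)"
  then obtain w c where v: "v = w @ [c]" "length w = m" "w @ [c] \<noteq> replicate m 0 @ [0]"
    by (auto simp: nonzero_vecs_def length_Suc_conv_rev replicate_append_same)
  then show "v \<in> (\<lambda>w. w @ [0]) ` nonzero_vecs m \<union> {v. length v = Suc m \<and> v ! m \<noteq> 0}"
    by (cases "c = 0") (auto simp: nonzero_vecs_def)
next
  fix v assume "v \<in> (\<lambda>w. w @ [0]) ` nonzero_vecs m \<union> {v. length v = Suc m \<and> v ! m \<noteq> 0}"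
  then show "v \<in> nonzero_vecs (Suc m)"
    by (auto simp: nonzero_vecs_def replicate_append_same[symmetric] nth_append)
qed

lemma card_lists_last_nonzero:
  "card {v :: 'a::{finite,zero} list. length v = Suc m \<and> v ! m \<noteq> 0} = CARD('a) ^ m * (CARD('a) - 1)"
proof -
  have "{v :: 'a list. length v = Suc m \<and> v ! m \<noteq> 0}
      = (\<lambda>(w, c). w @ [c]) ` ({w. length w = m} \<times> (UNIV - {0}))"
    by (auto simp: length_Suc_conv_rev nth_append image_iff)
  moreover have "inj_on (\<lambda>(w, c). w @ [c]) ({w :: 'a list. length w = m} \<times> (UNIV - {0}))"
    by (auto simp: inj_on_def)
  ultimately show ?thesis
    by (simp add: card_image card_cartesian_product card_lists_length_UNIV card_Diff_singleton)
qed

lemma sum_sum_of_bool_eq_sum_card: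
  assumes "finite X" "finite V"
  shows "(\<Sum>x\<in>X. \<Sum>v\<in>V. of_bool (P x v)) = (\<Sum>v\<in>V. of_nat (card {x \<in> X. P x v}) :: 'b::semiring_1)"
  using assms by (subst sum.swap) (simp add: Collect_conj_eq Int_commute)

lemma finite_nonzero_vecs: "finite (nonzero_vecs r :: 'a::{finite,zero} list set)"
  by (rule finite_subset[OF _ finite_lists_length_UNIV[of r]]) (auto simp: nonzero_vecs_def)

lemma sum_card_vec_hankel_kernels:
  fixes a :: "'a::{finite,field} list"
  assumes "length a \<le> m" "length a \<le> n + 1"
  defines "X \<equiv> {x. length x = m + n + 1 \<and> take (length a) x = a}"
  shows "(\<Sum>v\<in>nonzero_vecs (m + 1). card {x \<in> X. vec_hankel_zero x (m + 1) (n + 1) v})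
       = CARD('a) * (\<Sum>w\<in>nonzero_vecs m. card {x \<in> X. vec_hankel_zero x m (n + 2) w})
         + (CARD('a) - 1) * CARD('a) ^ (2 * m - length a)"
proof -
  define N1 where "N1 v = card {x \<in> X. vec_hankel_zero x (m + 1) (n + 1) v}" for v
  define N2 where "N2 w = card {x \<in> X. vec_hankel_zero x m (n + 2) w}" for w
  define B where "B = {v :: 'a list. length v = Suc m \<and> v ! m \<noteq> 0}"
  have N1_snoc_zero: "N1 (w @ [0]) = CARD('a) * N2 w" if "w \<in> nonzero_vecs m" for w
    using card_vec_hankel_kernel_extra_column[of w "length a" "n + 1" a] that assms(2)
    by (simp add: N1_def N2_def X_def vec_hankel_zero_iff vec_hankel_snoc_zero nonzero_vecs_def)
  have N1_last_nonzero: "N1 v = CARD('a) ^ (m - length a)" if "v \<in> B" for v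
    using card_vec_hankel_kernel_last_nonzero[of v m a "n + 1"] that assms(1)
    by (simp add: N1_def X_def B_def vec_hankel_zero_iff)
  have disjoint: "(\<lambda>w. w @ [0]) ` nonzero_vecs m \<inter> B = {}"
    by (auto simp: B_def nonzero_vecs_def nth_append)
  have "finite B"
    by (rule finite_subset[OF _ finite_lists_length_UNIV[of "Suc m"]]) (auto simp: B_def)
  then have "sum N1 (nonzero_vecs (m + 1)) = sum N1 ((\<lambda>w. w @ [0]) ` nonzero_vecs m) + sum N1 B"
    using sum.union_disjoint[OF finite_imageI[OF finite_nonzero_vecs] \<open>finite B\<close> disjoint]
    by (simp add: nonzero_vecs_Suc B_def)
  also have "\<dots> = (\<Sum>w\<in>nonzero_vecs m. CARD('a) * N2 w) + card B * CARD('a) ^ (m - length a)"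
    by (simp add: sum.reindex inj_on_def N1_snoc_zero N1_last_nonzero)
  also have "\<dots> = CARD('a) * sum N2 (nonzero_vecs m) + CARD('a) ^ m * (CARD('a) - 1) * CARD('a) ^ (m - length a)"
    by (simp add: sum_distrib_left B_def card_lists_last_nonzero)
  also have "CARD('a) ^ m * (CARD('a) - 1) * CARD('a) ^ (m - length a) = (CARD('a) - 1) * CARD('a) ^ (2 * m - length a)"
    using assms(1) by (simp add: power_add [symmetric] mult_ac mult_2_right)
  finally show ?thesis
    by (simp add: N1_def N2_def)
qed

theorem lemma15:
  fixes a :: "'a::{finite,field} list" and k m n :: nat
  assumes "k \<le> m" and "k \<le> n + 1" and "length a = k"
  shows "(\<Sum>x\<in>{x. length x = m + n + 1 \<and> take k x = a}.
            (\<Sum>v\<in>nonzero_vecs (m + 1). (of_bool (vec_hankel_zero x (m + 1) (n + 1) v) :: int)))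
       - int (card (UNIV :: 'a set)) * (\<Sum>x\<in>{x. length x = m + n + 1 \<and> take k x = a}.
            (\<Sum>v\<in>nonzero_vecs m. (of_bool (vec_hankel_zero x m (n + 2) v) :: int)))
       = (int (card (UNIV :: 'a set)) - 1) * int (card (UNIV :: 'a set)) ^ (2 * m - k)"
proof -
  define X where "X = {x :: 'a list. length x = m + n + 1 \<and> take k x = a}"
  have "finite X"
    by (rule finite_subset[OF _ finite_lists_length_UNIV[of "m + n + 1"]]) (auto simp: X_def)
  then have double_sums:
    "(\<Sum>x\<in>X. \<Sum>v\<in>nonzero_vecs r. (of_bool (vec_hankel_zero x r c v) :: int))
       = (\<Sum>v\<in>nonzero_vecs r. int (card {x \<in> X. vec_hankel_zero x r c v}))" for r c
    by (rule sum_sum_of_bool_eq_sum_card[OF _ finite_nonzero_vecs])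
  have counts: "int (\<Sum>v\<in>nonzero_vecs (m + 1). card {x \<in> X. vec_hankel_zero x (m + 1) (n + 1) v})
      = int (CARD('a) * (\<Sum>w\<in>nonzero_vecs m. card {x \<in> X. vec_hankel_zero x m (n + 2) w})
        + (CARD('a) - 1) * CARD('a) ^ (2 * m - k))"
    using sum_card_vec_hankel_kernels[of a m n] assms unfolding X_def by simp
  have "1 \<le> CARD('a)"
    by (simp add: Suc_le_eq)
  with counts show ?thesis
    unfolding X_def[symmetric] double_sums by (simp add: of_nat_diff)
qed

end
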